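(* Let $\mathcal{H}_C,\mathcal{H}_{C'}$ be finite-dimensional Hilbert spaces and let $\{\sigma_{abd|xyw}\}$ (with $a,b,d,x,y,w$ ranging over finite sets) be a (non-signalling) assemblage of positive semidefinite operators on $\mathcal{H}_{C}\otimes\mathcal{H}_{C'}$, prepared for Charlie after Alice, Bob and Dani, with inputs $x,y,w$, produce outputs $a,b,d$. Suppose that: (i) for all $x,y$: $\sigma_{d|w}=\mathrm{tr}_{C'}\big\{\sum_{a,b}\sigma_{abd|xyw}\big\}$ for all $d,w$; (ii) $\sum_{a,b}\sigma_{abd|xyw}=\psi\otimes\sigma_{d|w}$ for all $d,w,x,y$, where $\{\sigma_{d|w}\}_{d,w}$ is an extremal assemblage (of operators on $\mathcal{H}_C$) and $\psi$ is (the density operator of) a pure state on $\mathcal{H}_{C'}$. Then $\sigma_{abd|xyw}=\sigma_{ab|xy}\otimes\sigma_{d|w}$ for all $a,b,d,x,y,w$, where $\sigma_{ab|xy}=\mathrm{tr}_C\big\{\sum_d\sigma_{abd|xyw}\big\}$ is an operator on $\mathcal{H}_{C'}$ independent of $w$.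
   Context: An assemblage $\{\sigma_{abd|xyw}\}$ is a family of positive semidefinite operators whose sum over all outputs $a,b,d$ is a density operator independent of the inputs, and which satisfies the no-signalling conditions: summing over the output of any subset of the parties yields operators independent of those parties' inputs (in particular $p(ab|xyw)=\mathrm{tr}\sum_d\sigma_{abd|xyw}$ is independent of $w$). A bipartite assemblage $\{\sigma_{d|w}\}$ is a family of positive semidefinite operators with $\sum_d\sigma_{d|w}$ a density operator independent of $w$; it is extremal if it cannot be written as a nontrivial convex combination of other assemblages with the same input and output sets. In the tensor products the factor $\psi$ (resp. $\sigma_{ab|xy}$) acts on $\mathcal{H}_{C'}$ and $\sigma_{d|w}$ acts on $\mathcal{H}_C$. *)

theory Defs
  imports "Jordan_Normal_Form.Matrix"
begin

definition msum :: "nat \<Rightarrow> ('i \<Rightarrow> complex mat) \<Rightarrow> 'i set \<Rightarrow> complex mat" where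
  "msum n f I = mat n n (\<lambda>ij. \<Sum>i\<in>I. f i $$ ij)"

definition mtrace :: "complex mat \<Rightarrow> complex" where
  "mtrace A = (\<Sum>i<dim_row A. A $$ (i, i))"

definition psd :: "nat \<Rightarrow> complex mat \<Rightarrow> bool" where
  "psd n A \<longleftrightarrow> A \<in> carrier_mat n n \<and>
     (\<forall>v \<in> carrier_vec n. Im ((A *\<^sub>v v) \<bullet>c v) = 0 \<and> Re ((A *\<^sub>v v) \<bullet>c v) \<ge> 0)"

definition density :: "nat \<Rightarrow> complex mat \<Rightarrow> bool" where
  "density n A \<longleftrightarrow> psd n A \<and> mtrace A = 1"

definition pure_state :: "nat \<Rightarrow> complex mat \<Rightarrow> bool" where
  "pure_state n A \<longleftrightarrow> (\<exists>v \<in> carrier_vec n. v \<bullet>c v = 1 \<and>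
      A = mat n n (\<lambda>(i, j). v $ i * cnj (v $ j)))"

text \<open>H_C \<otimes> H_C' with dim H_C = nC, dim H_C' = nC'; the basis vector e_i \<otimes> f_j
  (i < nC, j < nC') has index i * nC' + j.  tensorCC S T is S \<otimes> T with S acting on H_C
  and T acting on H_C'.\<close>

definition tensorCC :: "nat \<Rightarrow> nat \<Rightarrow> complex mat \<Rightarrow> complex mat \<Rightarrow> complex mat" where
  "tensorCC nC nC' S T = mat (nC * nC') (nC * nC')
     (\<lambda>(k, l). S $$ (k div nC', l div nC') * T $$ (k mod nC', l mod nC'))"

definition ptrace_C' :: "nat \<Rightarrow> nat \<Rightarrow> complex mat \<Rightarrow> complex mat" where
  "ptrace_C' nC nC' A = mat nC nC (\<lambda>(i, i'). \<Sum>j<nC'. A $$ (i * nC' + j, i' * nC' + j))"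

definition ptrace_C :: "nat \<Rightarrow> nat \<Rightarrow> complex mat \<Rightarrow> complex mat" where
  "ptrace_C nC nC' A = mat nC' nC' (\<lambda>(j, j'). \<Sum>i<nC. A $$ (i * nC' + j, i * nC' + j'))"

definition bi_assemblage :: "nat \<Rightarrow> ('d::finite \<Rightarrow> 'w::finite \<Rightarrow> complex mat) \<Rightarrow> bool" where
  "bi_assemblage n s \<longleftrightarrow> (\<forall>d w. psd n (s d w)) \<and>
     (\<forall>w. density n (msum n (\<lambda>d. s d w) UNIV)) \<and>
     (\<forall>w w'. msum n (\<lambda>d. s d w) UNIV = msum n (\<lambda>d. s d w') UNIV)"

definition extremal_bi_assemblage :: "nat \<Rightarrow> ('d::finite \<Rightarrow> 'w::finite \<Rightarrow> complex mat) \<Rightarrow> bool" where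
  "extremal_bi_assemblage n s \<longleftrightarrow> bi_assemblage n s \<and>
     (\<forall>(p::real) t1 t2. 0 < p \<and> p < 1 \<and> bi_assemblage n t1 \<and> bi_assemblage n t2 \<and>
        (\<forall>d w. s d w = complex_of_real p \<cdot>\<^sub>m t1 d w + complex_of_real (1 - p) \<cdot>\<^sub>m t2 d w)
        \<longrightarrow> t1 = s \<and> t2 = s)"

definition assemblage :: "nat \<Rightarrow>
   ('a::finite \<Rightarrow> 'b::finite \<Rightarrow> 'd::finite \<Rightarrow> 'x::finite \<Rightarrow> 'y::finite \<Rightarrow> 'w::finite \<Rightarrow> complex mat) \<Rightarrow> bool" where
  "assemblage n s \<longleftrightarrow>
     (\<forall>a b d x y w. psd n (s a b d x y w)) \<and>
     (\<forall>x y w. density n (msum n (\<lambda>(a, b, d). s a b d x y w) UNIV)) \<and>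
     (\<forall>x y w x' y' w'. msum n (\<lambda>(a, b, d). s a b d x y w) UNIV
                       = msum n (\<lambda>(a, b, d). s a b d x' y' w') UNIV) \<and>
     \<comment> \<open>no-signalling: summing over outputs of a subset of parties removes dependence on their inputs\<close>
     (\<forall>b d x y w x'. msum n (\<lambda>a. s a b d x y w) UNIV = msum n (\<lambda>a. s a b d x' y w) UNIV) \<and>
     (\<forall>a d x y w y'. msum n (\<lambda>b. s a b d x y w) UNIV = msum n (\<lambda>b. s a b d x y' w) UNIV) \<and>
     (\<forall>a b x y w w'. msum n (\<lambda>d. s a b d x y w) UNIV = msum n (\<lambda>d. s a b d x y w') UNIV) \<and>
     (\<forall>d x y w x' y'. msum n (\<lambda>(a, b). s a b d x y w) UNIV = msum n (\<lambda>(a, b). s a b d x' y' w) UNIV) \<and>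
     (\<forall>b x y w x' w'. msum n (\<lambda>(a, d). s a b d x y w) UNIV = msum n (\<lambda>(a, d). s a b d x' y w') UNIV) \<and>
     (\<forall>a x y w y' w'. msum n (\<lambda>(b, d). s a b d x y w) UNIV = msum n (\<lambda>(b, d). s a b d x y' w') UNIV)"

end

theory Submission
  imports Defs
begin

text \<open>Each \<sigma>_{abd|xyw} is dominated by \<Sum>_{ab} \<sigma>_{abd|xyw} = \<sigma>_{d|w} \<otimes> \<psi>, where
  \<psi> = |v\<rangle>\<langle>v| is pure. A vector e_i \<otimes> u with u \<perp> v is a null vector of the dominating
  operator, hence of \<sigma>_{abd|xyw}; therefore \<sigma>_{abd|xyw} = \<tau>_{abd|xyw} \<otimes> \<psi>, with \<tau> the partial
  trace over C'. For fixed a, b, x, y the family \<tau>_{d|w} is dominated by the extremal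
  assemblage \<sigma>_{d|w} and, by no-signalling, has a w-independent marginal of some trace p.
  If 0 < p < 1, then \<tau>/p and (\<sigma> - \<tau>)/(1 - p) are assemblages mixing to \<sigma>_{d|w}, so extremality
  forces \<tau>_{d|w} = p \<sigma>_{d|w} (for p = 0 and p = 1 this is immediate). Hence
  \<sigma>_{abd|xyw} = \<sigma>_{d|w} \<otimes> p_{abxy} \<psi>.\<close>

section \<open>Positive semidefinite matrices and quadratic forms\<close>

definition sesq :: "nat \<Rightarrow> complex mat \<Rightarrow> (nat \<Rightarrow> complex) \<Rightarrow> (nat \<Rightarrow> complex) \<Rightarrow> complex" where
  "sesq n A y z = (\<Sum>k<n. \<Sum>l<n. cnj (y k) * A $$ (k, l) * z l)"

abbreviation qform :: "nat \<Rightarrow> complex mat \<Rightarrow> (nat \<Rightarrow> complex) \<Rightarrow> complex" where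
  "qform n A z \<equiv> sesq n A z z"

lemma scalar_prod_mult_mat_vec_eq_qform:
  assumes "A \<in> carrier_mat n n"
  shows "(A *\<^sub>v vec n z) \<bullet>c vec n z = qform n A z"
proof -
  have "(A *\<^sub>v vec n z) \<bullet>c vec n z = (\<Sum>k<n. (\<Sum>l<n. A $$ (k, l) * z l) * cnj (z k))"
    using assms by (auto simp: scalar_prod_def row_def lessThan_atLeast0 intro!: sum.cong)
  also have "\<dots> = qform n A z"
    unfolding sesq_def by (auto simp: sum_distrib_right intro!: sum.cong)
  finally show ?thesis .
qed

lemma psd_iff_qform:
  "psd n A \<longleftrightarrow> A \<in> carrier_mat n n \<and> (\<forall>z. Im (qform n A z) = 0 \<and> 0 \<le> Re (qform n A z))"
proof
  assume "psd n A"
  then show "A \<in> carrier_mat n n \<and> (\<forall>z. Im (qform n A z) = 0 \<and> 0 \<le> Re (qform n A z))"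
    unfolding psd_def by (metis scalar_prod_mult_mat_vec_eq_qform vec_carrier)
next
  assume A: "A \<in> carrier_mat n n \<and> (\<forall>z. Im (qform n A z) = 0 \<and> 0 \<le> Re (qform n A z))"
  show "psd n A" unfolding psd_def
  proof (intro conjI ballI)
    fix v :: "complex vec" assume "v \<in> carrier_vec n"
    then have "vec n (($) v) = v" by auto
    then have "(A *\<^sub>v v) \<bullet>c v = qform n A (($) v)"
      using scalar_prod_mult_mat_vec_eq_qform[of A n "($) v"] A by simp
    then show "Im ((A *\<^sub>v v) \<bullet>c v) = 0" "0 \<le> Re ((A *\<^sub>v v) \<bullet>c v)"
      using A by auto
  qed (use A in auto)
qed

lemma psd_carrier: "psd n A \<Longrightarrow> A \<in> carrier_mat n n"
  unfolding psd_def by simp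

lemma psd_qformD:
  assumes "psd n A"
  shows "Im (qform n A z) = 0" "0 \<le> Re (qform n A z)"
  using assms unfolding psd_iff_qform by auto

lemma qform_add_smult:
  "qform n A (\<lambda>k. z k + c * y k)
     = qform n A z + cnj c * sesq n A y z + c * sesq n A z y + cnj c * c * qform n A y"
  unfolding sesq_def by (simp add: algebra_simps sum.distrib sum_distrib_left)

lemma nonneg_quadratic_imp_linear_coeff_zero:
  fixes r q :: real
  assumes "\<And>t. 0 \<le> t * r + t\<^sup>2 * q" and "0 \<le> q"
  shows "r = 0"
proof (rule ccontr)
  assume "r \<noteq> 0"
  define t where "t = - r / (1 + q)"
  have "t * r + t\<^sup>2 * q = - (r\<^sup>2) / (1 + q)\<^sup>2"
    unfolding t_def using \<open>0 \<le> q\<close>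
    by (simp add: divide_simps power2_eq_square) (simp add: algebra_simps)
  also have "\<dots> < 0" using \<open>r \<noteq> 0\<close> \<open>0 \<le> q\<close> by (simp add: divide_neg_pos)
  finally show False using assms(1)[of t] by simp
qed

text \<open>Testing nonnegativity of the form along \<open>z + c y\<close> for real and for imaginary \<open>c\<close>
  forces both cross terms to vanish.\<close>

lemma psd_qform_zero_imp_sesq_zero:
  assumes A: "psd n A" and z: "qform n A z = 0"
  shows "sesq n A y z = 0" "sesq n A z y = 0"
proof -
  define a where "a = sesq n A y z"
  define b where "b = sesq n A z y"
  define q where "q = qform n A y"
  have expand: "qform n A (\<lambda>k. z k + c * y k) = cnj c * a + c * b + cnj c * c * q" for c
    using qform_add_smult[of n A z c y] z unfolding a_def b_def q_def by simp
  have nonneg: "Im (cnj c * a + c * b + cnj c * c * q) = 0"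
    "0 \<le> Re (cnj c * a + c * b + cnj c * c * q)" for c
    using psd_qformD[OF A, of "\<lambda>k. z k + c * y k"] unfolding expand by auto
  have q: "Im q = 0" "0 \<le> Re q" using psd_qformD[OF A] unfolding q_def by auto
  have "Im a + Im b = 0" using nonneg(1)[of 1] q by simp
  moreover have "Re b - Re a = 0" using nonneg(1)[of \<i>] q by simp
  moreover have "Re a + Re b = 0"
  proof (rule nonneg_quadratic_imp_linear_coeff_zero[OF _ q(2)])
    show "0 \<le> t * (Re a + Re b) + t\<^sup>2 * Re q" for t
      using nonneg(2)[of "complex_of_real t"] q by (simp add: algebra_simps power2_eq_square)
  qed
  moreover have "Im a - Im b = 0"
  proof (rule nonneg_quadratic_imp_linear_coeff_zero[OF _ q(2)])
    show "0 \<le> t * (Im a - Im b) + t\<^sup>2 * Re q" for t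
      using nonneg(2)[of "\<i> * complex_of_real t"] q by (simp add: algebra_simps power2_eq_square)
  qed
  ultimately have "a = 0" "b = 0" by (auto simp: complex_eq_iff)
  then show "sesq n A y z = 0" "sesq n A z y = 0" unfolding a_def b_def by simp_all
qed

lemma sesq_unit_left:
  "i < n \<Longrightarrow> sesq n A (\<lambda>k. if k = i then 1 else 0) z = (\<Sum>l<n. A $$ (i, l) * z l)"
  unfolding sesq_def by (simp add: if_distrib if_distribR sum.If_cases cong: if_cong)

lemma sesq_unit_right:
  "i < n \<Longrightarrow> sesq n A z (\<lambda>k. if k = i then 1 else 0) = (\<Sum>k<n. cnj (z k) * A $$ (k, i))"
  unfolding sesq_def by (simp add: if_distrib if_distribR sum.If_cases cong: if_cong)

lemma qform_unit: "i < n \<Longrightarrow> qform n A (\<lambda>k. if k = i then 1 else 0) = A $$ (i, i)"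
  by (simp add: sesq_unit_left if_distrib cong: if_cong)

lemma psd_qform_zero_imp_mult_zero:
  assumes "psd n A" "qform n A z = 0" "i < n"
  shows "(\<Sum>l<n. A $$ (i, l) * z l) = 0" "(\<Sum>k<n. cnj (z k) * A $$ (k, i)) = 0"
  using psd_qform_zero_imp_sesq_zero[OF assms(1,2), of "\<lambda>k. if k = i then 1 else 0"] assms(3)
  by (simp_all add: sesq_unit_left sesq_unit_right)

lemma qform_minus:
  assumes "A \<in> carrier_mat n n" "B \<in> carrier_mat n n"
  shows "qform n (A - B) z = qform n A z - qform n B z"
  unfolding sesq_def using assms by (simp add: algebra_simps sum_subtractf)

lemma qform_smult:
  assumes "A \<in> carrier_mat n n"
  shows "qform n (c \<cdot>\<^sub>m A) z = c * qform n A z"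
  unfolding sesq_def using assms by (simp add: algebra_simps sum_distrib_left)

lemma psd_smult:
  assumes "psd n A" "0 \<le> c"
  shows "psd n (complex_of_real c \<cdot>\<^sub>m A)"
  using assms unfolding psd_iff_qform by (auto simp: qform_smult)

lemma mtrace_eq_sum_qform_unit:
  "A \<in> carrier_mat n n \<Longrightarrow> mtrace A = (\<Sum>i<n. qform n A (\<lambda>k. if k = i then 1 else 0))"
  unfolding mtrace_def by (simp add: qform_unit)

lemma psd_mtraceD:
  assumes "psd n A"
  shows "Im (mtrace A) = 0" "0 \<le> Re (mtrace A)"
  unfolding mtrace_eq_sum_qform_unit[OF psd_carrier[OF assms]] Im_sum Re_sum
  using psd_qformD[OF assms] by (auto intro: sum_nonneg)

lemma psd_mtrace_zero:
  assumes A: "psd n A" and tr: "mtrace A = 0"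
  shows "A = 0\<^sub>m n n"
proof -
  let ?e = "\<lambda>i k. if k = i then 1 else 0 :: complex"
  have "(\<Sum>i<n. Re (qform n A (?e i))) = 0"
    using tr unfolding mtrace_eq_sum_qform_unit[OF psd_carrier[OF A]] by (metis Re_sum zero_complex.sel(1))
  then have "Re (qform n A (?e i)) = 0" if "i < n" for i
    using psd_qformD(2)[OF A] that by (subst (asm) sum_nonneg_eq_0_iff) auto
  then have unit_zero: "qform n A (?e i) = 0" if "i < n" for i
    using psd_qformD(1)[OF A] that by (simp add: complex_eq_iff)
  show ?thesis
  proof (rule eq_matI)
    fix i j assume "i < dim_row (0\<^sub>m n n :: complex mat)" "j < dim_col (0\<^sub>m n n :: complex mat)"
    then have ij: "i < n" "j < n" by auto
    have "(\<Sum>l<n. A $$ (i, l) * ?e j l) = 0"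
      by (rule psd_qform_zero_imp_mult_zero(1)[OF A unit_zero[OF ij(2)] ij(1)])
    then show "A $$ (i, j) = 0\<^sub>m n n $$ (i, j)" using ij by (simp add: if_distrib cong: if_cong)
  qed (use psd_carrier[OF A] in auto)
qed

lemma mtrace_minus:
  assumes "A \<in> carrier_mat n n" "B \<in> carrier_mat n n"
  shows "mtrace (A - B) = mtrace A - mtrace B"
  unfolding mtrace_def using assms by (simp add: sum_subtractf)

lemma mtrace_smult:
  assumes "A \<in> carrier_mat n n"
  shows "mtrace (c \<cdot>\<^sub>m A) = c * mtrace A"
  unfolding mtrace_def using assms by (simp add: sum_distrib_left)

lemma msum_carrier [simp]: "msum n f I \<in> carrier_mat n n"
  unfolding msum_def by simp

lemma qform_msum: "qform n (msum n f I) z = (\<Sum>i\<in>I. qform n (f i) z)"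
proof -
  have "qform n (msum n f I) z = (\<Sum>k<n. \<Sum>l<n. \<Sum>i\<in>I. cnj (z k) * f i $$ (k, l) * z l)"
    unfolding sesq_def msum_def by (simp add: sum_distrib_left sum_distrib_right)
  also have "\<dots> = (\<Sum>k<n. \<Sum>i\<in>I. \<Sum>l<n. cnj (z k) * f i $$ (k, l) * z l)"
    by (rule sum.cong[OF refl], rule sum.swap)
  also have "\<dots> = (\<Sum>i\<in>I. qform n (f i) z)"
    unfolding sesq_def by (rule sum.swap)
  finally show ?thesis .
qed

lemma psd_msum:
  assumes "\<And>i. i \<in> I \<Longrightarrow> psd n (f i)"
  shows "psd n (msum n f I)"
  unfolding psd_iff_qform qform_msum Im_sum Re_sum
  using psd_qformD[OF assms] by (simp add: sum_nonneg)

lemma mtrace_msum: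
  assumes "\<And>i. i \<in> I \<Longrightarrow> f i \<in> carrier_mat n n"
  shows "mtrace (msum n f I) = (\<Sum>i\<in>I. mtrace (f i))"
proof -
  have "mtrace (msum n f I) = (\<Sum>k<n. \<Sum>i\<in>I. f i $$ (k, k))"
    unfolding mtrace_def msum_def by simp
  also have "\<dots> = (\<Sum>i\<in>I. \<Sum>k<n. f i $$ (k, k))" by (rule sum.swap)
  also have "\<dots> = (\<Sum>i\<in>I. mtrace (f i))" unfolding mtrace_def using assms by (intro sum.cong) auto
  finally show ?thesis .
qed

lemma msum_psd_mtrace_zero:
  assumes I: "finite I" and psd: "\<And>i. i \<in> I \<Longrightarrow> psd n (f i)"
    and tr: "mtrace (msum n f I) = 0" and i: "i \<in> I"
  shows "f i = 0\<^sub>m n n"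
proof -
  have "mtrace (msum n f I) = (\<Sum>j\<in>I. mtrace (f j))"
    by (rule mtrace_msum) (rule psd_carrier[OF psd])
  then have "(\<Sum>j\<in>I. Re (mtrace (f j))) = 0" using tr by (metis Re_sum zero_complex.sel(1))
  then have "Re (mtrace (f i)) = 0"
    using sum_nonneg_eq_0_iff[OF I, of "\<lambda>j. Re (mtrace (f j))"] psd_mtraceD(2)[OF psd] i by simp
  then have "mtrace (f i) = 0" using psd_mtraceD(1)[OF psd[OF i]] by (simp add: complex_eq_iff)
  then show ?thesis by (rule psd_mtrace_zero[OF psd[OF i]])
qed

lemma msum_minus:
  assumes "\<And>i. i \<in> I \<Longrightarrow> f i \<in> carrier_mat n n" "\<And>i. i \<in> I \<Longrightarrow> g i \<in> carrier_mat n n"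
  shows "msum n (\<lambda>i. f i - g i) I = msum n f I - msum n g I"
proof (rule eq_matI)
  fix i j assume "i < dim_row (msum n f I - msum n g I)" "j < dim_col (msum n f I - msum n g I)"
  then have "i < n" "j < n" by (auto simp: msum_def)
  then have "(f k - g k) $$ (i, j) = f k $$ (i, j) - g k $$ (i, j)" if "k \<in> I" for k
    using assms that by (metis carrier_matD index_minus_mat(1))
  then show "msum n (\<lambda>i. f i - g i) I $$ (i, j) = (msum n f I - msum n g I) $$ (i, j)"
    using \<open>i < n\<close> \<open>j < n\<close> by (simp add: msum_def sum_subtractf[symmetric])
qed (auto simp: msum_def)

lemma msum_smult:
  assumes "\<And>i. i \<in> I \<Longrightarrow> f i \<in> carrier_mat n n"
  shows "msum n (\<lambda>i. c \<cdot>\<^sub>m f i) I = c \<cdot>\<^sub>m msum n f I"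
proof (rule eq_matI)
  fix i j assume "i < dim_row (c \<cdot>\<^sub>m msum n f I)" "j < dim_col (c \<cdot>\<^sub>m msum n f I)"
  then have "i < n" "j < n" by (auto simp: msum_def)
  then have "(c \<cdot>\<^sub>m f k) $$ (i, j) = c * f k $$ (i, j)" if "k \<in> I" for k
    using assms that by (metis carrier_matD index_smult_mat(1))
  then show "msum n (\<lambda>i. c \<cdot>\<^sub>m f i) I $$ (i, j) = (c \<cdot>\<^sub>m msum n f I) $$ (i, j)"
    using \<open>i < n\<close> \<open>j < n\<close> by (simp add: msum_def sum_distrib_left)
qed (auto simp: msum_def)

lemma psd_msum_minus_member:
  assumes I: "finite I" "i \<in> I" and psd: "\<And>j. j \<in> I \<Longrightarrow> psd n (f j)"
  shows "psd n (msum n f I - f i)"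
proof -
  have fi: "f i \<in> carrier_mat n n" using psd_carrier psd I(2) by blast
  have "msum n f I - f i = msum n f (I - {i})"
  proof (rule eq_matI)
    fix k l assume "k < dim_row (msum n f (I - {i}))" "l < dim_col (msum n f (I - {i}))"
    then show "(msum n f I - f i) $$ (k, l) = msum n f (I - {i}) $$ (k, l)"
      using I fi by (simp add: msum_def sum.remove)
  qed (use fi in \<open>auto simp: msum_def\<close>)
  then show ?thesis using psd psd_msum[of "I - {i}" n f] by simp
qed

section \<open>Tensor products and partial traces\<close>

lemma sum_lessThan_mult_nat: "(\<Sum>k<m * n. f k) = (\<Sum>i<m. \<Sum>j<n. f (i * n + j :: nat))"
proof -
  have "(\<Sum>k<m * n. f k) = (\<Sum>i<m. \<Sum>k\<in>{i * n..<i * n + n}. f k)"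
    by (rule sum.nat_group[symmetric])
  also have "\<dots> = (\<Sum>i<m. \<Sum>j<n. f (i * n + j))"
    using sum.atLeastLessThan_shift_0[of f "_ * n" "_ * n + n"] by (simp add: lessThan_atLeast0 comp_def)
  finally show ?thesis .
qed

lemma index_lt_mult:
  assumes "(i :: nat) < m" "j < n"
  shows "i * n + j < m * n"
proof -
  have "i * n + j < Suc i * n" using assms(2) by simp
  also have "\<dots> \<le> m * n" using assms(1) by (intro mult_right_mono) auto
  finally show ?thesis .
qed

lemma tensorCC_carrier [simp]: "tensorCC m n S T \<in> carrier_mat (m * n) (m * n)"
  unfolding tensorCC_def by simp

lemma index_tensorCC:
  assumes "i < m" "j < n" "i' < m" "j' < n"
  shows "tensorCC m n S T $$ (i * n + j, i' * n + j') = S $$ (i, i') * T $$ (j, j')"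
  using assms by (simp add: tensorCC_def index_lt_mult)

lemma mat_eq_tensor_blockI:
  fixes m n :: nat
  assumes "A \<in> carrier_mat (m * n) (m * n)" "B \<in> carrier_mat (m * n) (m * n)"
    and "\<And>i j i' j'. i < m \<Longrightarrow> j < n \<Longrightarrow> i' < m \<Longrightarrow> j' < n \<Longrightarrow>
           A $$ (i * n + j, i' * n + j') = B $$ (i * n + j, i' * n + j')"
  shows "A = B"
proof (rule eq_matI)
  fix k l assume "k < dim_row B" "l < dim_col B"
  then have kl: "k < m * n" "l < m * n" using assms(2) by auto
  then have "0 < n" by (cases n) auto
  then have "k div n < m" "l div n < m" "k mod n < n" "l mod n < n"
    using kl by (auto simp: less_mult_imp_div_less)
  then show "A $$ (k, l) = B $$ (k, l)"
    using assms(3)[of "k div n" "k mod n" "l div n" "l mod n"] by simp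
qed (use assms in auto)

lemma ptrace_C'_carrier [simp]: "ptrace_C' m n A \<in> carrier_mat m m"
  unfolding ptrace_C'_def by simp

lemma ptrace_C'_msum:
  fixes m n :: nat
  shows "ptrace_C' m n (msum (m * n) f I) = msum m (\<lambda>i. ptrace_C' m n (f i)) I"
proof (rule eq_matI)
  fix a b assume "a < dim_row (msum m (\<lambda>i. ptrace_C' m n (f i)) I)"
    "b < dim_col (msum m (\<lambda>i. ptrace_C' m n (f i)) I)"
  then have ab: "a < m" "b < m" by (auto simp: msum_def)
  have "ptrace_C' m n (msum (m * n) f I) $$ (a, b) = (\<Sum>j<n. \<Sum>i\<in>I. f i $$ (a * n + j, b * n + j))"
    unfolding ptrace_C'_def msum_def using ab by (simp add: index_lt_mult)
  also have "\<dots> = (\<Sum>i\<in>I. \<Sum>j<n. f i $$ (a * n + j, b * n + j))" by (rule sum.swap)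
  also have "\<dots> = msum m (\<lambda>i. ptrace_C' m n (f i)) I $$ (a, b)"
    unfolding ptrace_C'_def msum_def using ab by simp
  finally show "ptrace_C' m n (msum (m * n) f I) $$ (a, b) = msum m (\<lambda>i. ptrace_C' m n (f i)) I $$ (a, b)" .
qed (auto simp: msum_def ptrace_C'_def)

lemma ptrace_C_msum_tensorCC:
  fixes m n :: nat
  assumes A: "\<And>d. d \<in> I \<Longrightarrow> A d \<in> carrier_mat m m" and P: "P \<in> carrier_mat n n"
  shows "ptrace_C m n (msum (m * n) (\<lambda>d. tensorCC m n (A d) P) I) = mtrace (msum m A I) \<cdot>\<^sub>m P"
proof (rule eq_matI)
  fix j j' assume "j < dim_row (mtrace (msum m A I) \<cdot>\<^sub>m P)" "j' < dim_col (mtrace (msum m A I) \<cdot>\<^sub>m P)"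
  then have jj: "j < n" "j' < n" using P by auto
  have "ptrace_C m n (msum (m * n) (\<lambda>d. tensorCC m n (A d) P) I) $$ (j, j')
      = (\<Sum>i<m. \<Sum>d\<in>I. A d $$ (i, i)) * P $$ (j, j')"
    unfolding ptrace_C_def msum_def using jj by (simp add: index_lt_mult index_tensorCC sum_distrib_right)
  also have "\<dots> = (mtrace (msum m A I) \<cdot>\<^sub>m P) $$ (j, j')"
    unfolding mtrace_def msum_def using jj P by simp
  finally show "ptrace_C m n (msum (m * n) (\<lambda>d. tensorCC m n (A d) P) I) $$ (j, j')
      = (mtrace (msum m A I) \<cdot>\<^sub>m P) $$ (j, j')" .
qed (use P in \<open>auto simp: ptrace_C_def\<close>)

lemma tensorCC_smult:
  fixes m n :: nat
  assumes "S \<in> carrier_mat m m" "P \<in> carrier_mat n n"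
  shows "tensorCC m n (c \<cdot>\<^sub>m S) P = tensorCC m n S (c \<cdot>\<^sub>m P)"
  by (rule mat_eq_tensor_blockI[of _ m n]) (use assms in \<open>auto simp: index_tensorCC\<close>)

definition kron_fun :: "nat \<Rightarrow> (nat \<Rightarrow> complex) \<Rightarrow> (nat \<Rightarrow> complex) \<Rightarrow> nat \<Rightarrow> complex" where
  "kron_fun n u w k = u (k div n) * w (k mod n)"

lemma qform_tensorCC:
  "qform (m * n) (tensorCC m n S T) (kron_fun n u w) = qform m S u * qform n T w"
proof -
  have "qform (m * n) (tensorCC m n S T) (kron_fun n u w) =
     (\<Sum>i<m. \<Sum>j<n. \<Sum>i'<m. \<Sum>j'<n. cnj (u i * w j) * (S $$ (i, i') * T $$ (j, j')) * (u i' * w j'))"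
    unfolding sesq_def sum_lessThan_mult_nat kron_fun_def by (intro sum.cong refl) (simp add: index_tensorCC)
  also have "\<dots> = (\<Sum>i<m. \<Sum>i'<m. \<Sum>j<n. \<Sum>j'<n. cnj (u i * w j) * (S $$ (i, i') * T $$ (j, j')) * (u i' * w j'))"
    by (rule sum.cong[OF refl], rule sum.swap)
  also have "\<dots> = qform m S u * qform n T w"
    unfolding sesq_def sum_distrib_right
    unfolding sum_distrib_left
    by (intro sum.cong refl) (simp add: algebra_simps)
  finally show ?thesis .
qed

lemma sum_kron_unit_right:
  "i < m \<Longrightarrow> (\<Sum>l<m * n. X $$ (r, l) * kron_fun n (\<lambda>k. if k = i then 1 else 0) w l)
     = (\<Sum>j<n. X $$ (r, i * n + j) * w j)"
  unfolding sum_lessThan_mult_nat kron_fun_def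
  by (simp add: if_distrib if_distribR sum.If_cases cong: if_cong)

lemma sum_kron_unit_left:
  "i < m \<Longrightarrow> (\<Sum>k<m * n. cnj (kron_fun n (\<lambda>k. if k = i then 1 else 0) w k) * X $$ (k, r))
     = (\<Sum>j<n. cnj (w j) * X $$ (i * n + j, r))"
  unfolding sum_lessThan_mult_nat kron_fun_def
  by (simp add: if_distrib if_distribR sum.If_cases cong: if_cong)

lemma qform_rank_one:
  assumes "P = mat n n (\<lambda>(i, j). v i * cnj (v j))"
  shows "qform n P w = cnj (\<Sum>j<n. cnj (v j) * w j) * (\<Sum>j<n. cnj (v j) * w j)"
proof -
  have "cnj (\<Sum>j<n. cnj (v j) * w j) * (\<Sum>j<n. cnj (v j) * w j) =
     (\<Sum>k<n. \<Sum>l<n. cnj (cnj (v k) * w k) * (cnj (v l) * w l))"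
    by (simp add: cnj_sum sum_product)
  also have "\<dots> = qform n P w"
    unfolding sesq_def assms by (intro sum.cong refl) (simp add: algebra_simps)
  finally show ?thesis by simp
qed

lemma pure_stateE:
  assumes "pure_state n P"
  obtains v where "P = mat n n (\<lambda>(i, j). v i * cnj (v j))" "(\<Sum>j<n. cnj (v j) * v j) = 1"
proof -
  obtain u where "u \<in> carrier_vec n" "u \<bullet>c u = 1" "P = mat n n (\<lambda>(i, j). u $ i * cnj (u $ j))"
    using assms unfolding pure_state_def by blast
  then show ?thesis
    using that[of "\<lambda>j. u $ j"] by (simp add: scalar_prod_def lessThan_atLeast0 mult.commute)
qed

lemma pure_state_carrier: "pure_state n P \<Longrightarrow> P \<in> carrier_mat n n"
  unfolding pure_state_def by auto

lemma psd_tensorCC_pure_state_imp_psd: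
  assumes X: "psd (m * n) (tensorCC m n T P)" and P: "pure_state n P" and T: "T \<in> carrier_mat m m"
  shows "psd m T"
proof -
  obtain v where Pv: "P = mat n n (\<lambda>(i, j). v i * cnj (v j))" and v: "(\<Sum>j<n. cnj (v j) * v j) = 1"
    using P by (rule pure_stateE)
  have "qform n P v = 1" unfolding qform_rank_one[OF Pv] v by simp
  then have "qform m T u = qform (m * n) (tensorCC m n T P) (kron_fun n u v)" for u
    by (simp add: qform_tensorCC)
  then show ?thesis using X T unfolding psd_iff_qform by simp
qed

section \<open>Operators dominated by a product with a pure state\<close>

lemma annihilator_of_orthogonal_complement:
  fixes n :: nat
  assumes v: "(\<Sum>j<n. cnj (v j) * v j) = 1"
    and f: "\<And>w. (\<Sum>j<n. cnj (v j) * w j) = 0 \<Longrightarrow> (\<Sum>j<n. f j * w j) = 0"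
    and j1: "j1 < n"
  shows "f j1 = cnj (v j1) * (\<Sum>j<n. f j * v j)"
proof -
  define w where "w j = (if j = j1 then 1 else 0) - cnj (v j1) * v j" for j
  have pair_w: "(\<Sum>j<n. g j * w j) = g j1 - cnj (v j1) * (\<Sum>j<n. g j * v j)" for g
  proof -
    have "(\<Sum>j<n. g j * w j) = (\<Sum>j<n. g j * (if j = j1 then 1 else 0)) - cnj (v j1) * (\<Sum>j<n. g j * v j)"
      by (simp add: w_def right_diff_distrib sum_subtractf sum_distrib_left mult.left_commute)
    also have "(\<Sum>j<n. g j * (if j = j1 then 1 else 0)) = g j1"
      using j1 by (simp add: if_distrib sum.delta cong: if_cong)
    finally show ?thesis .
  qed
  have "(\<Sum>j<n. cnj (v j) * w j) = 0" using pair_w[of "\<lambda>j. cnj (v j)"] v by simp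
  then show ?thesis using f pair_w[of f] by simp
qed

lemma psd_below_tensorCC_rank_one_kernel:
  fixes m n :: nat
  assumes X: "psd (m * n) X" and le: "psd (m * n) (tensorCC m n S P - X)"
    and P: "P = mat n n (\<lambda>(i, j). v i * cnj (v j))"
    and w: "(\<Sum>j<n. cnj (v j) * w j) = 0" and i: "i < m" and r: "r < m * n"
  shows "(\<Sum>j<n. X $$ (r, i * n + j) * w j) = 0" "(\<Sum>j<n. cnj (w j) * X $$ (i * n + j, r)) = 0"
proof -
  define z where "z = kron_fun n (\<lambda>k. if k = i then 1 else 0) w"
  have "qform (m * n) (tensorCC m n S P) z = 0"
    unfolding z_def qform_tensorCC qform_rank_one[OF P] w by simp
  then have "qform (m * n) (tensorCC m n S P - X) z = - qform (m * n) X z"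
    using qform_minus[OF tensorCC_carrier psd_carrier[OF X]] by simp
  then have "qform (m * n) X z = 0"
    using psd_qformD[OF X, of z] psd_qformD[OF le, of z] by (simp add: complex_eq_iff)
  from psd_qform_zero_imp_mult_zero[OF X this r] show
    "(\<Sum>j<n. X $$ (r, i * n + j) * w j) = 0" "(\<Sum>j<n. cnj (w j) * X $$ (i * n + j, r)) = 0"
    unfolding z_def sum_kron_unit_right[OF i] sum_kron_unit_left[OF i] .
qed

lemma psd_below_tensorCC_pure_state:
  fixes m n :: nat
  assumes X: "psd (m * n) X" and le: "psd (m * n) (tensorCC m n S P - X)" and P: "pure_state n P"
  shows "X = tensorCC m n (ptrace_C' m n X) P"
proof -
  obtain v where Pv: "P = mat n n (\<lambda>(i, j). v i * cnj (v j))" and v: "(\<Sum>j<n. cnj (v j) * v j) = 1"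
    using P by (rule pure_stateE)
  note kernel = psd_below_tensorCC_rank_one_kernel[OF X le Pv]
  have col: "X $$ (r, i * n + j1) = cnj (v j1) * (\<Sum>j<n. X $$ (r, i * n + j) * v j)"
    if i: "i < m" and r: "r < m * n" and j1: "j1 < n" for r i j1
    by (rule annihilator_of_orthogonal_complement[OF v kernel(1)[OF _ i r] j1])
  have row: "X $$ (i * n + j1, r) = v j1 * (\<Sum>j<n. X $$ (i * n + j, r) * cnj (v j))"
    if "i < m" "r < m * n" "j1 < n" for r i j1
  proof (rule annihilator_of_orthogonal_complement[where v="\<lambda>j. cnj (v j)", simplified])
    show "(\<Sum>j<n. v j * cnj (v j)) = 1" using v by (simp add: mult.commute)
    show "j1 < n" by fact
    fix u assume "(\<Sum>j<n. v j * u j) = 0"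
    then have "cnj (\<Sum>j<n. v j * u j) = 0" by simp
    then have "(\<Sum>j<n. cnj (v j) * cnj (u j)) = 0" by simp
    from kernel(2)[OF this that(1,2)] show "(\<Sum>j<n. X $$ (i * n + j, r) * u j) = 0"
      by (simp add: mult.commute)
  qed
  define D where "D i0 i = (\<Sum>j<n. \<Sum>k<n. X $$ (i0 * n + k, i * n + j) * cnj (v k) * v j)" for i0 i
  have block: "X $$ (i0 * n + j0, i * n + j1) = v j0 * cnj (v j1) * D i0 i"
    if "i0 < m" "i < m" "j0 < n" "j1 < n" for i0 i j0 j1
  proof -
    have "X $$ (i0 * n + j0, i * n + j1) = cnj (v j1) * (\<Sum>j<n. X $$ (i0 * n + j0, i * n + j) * v j)"
      using col[OF that(2) index_lt_mult[OF that(1,3)] that(4)] .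
    also have "\<dots> = cnj (v j1) * (\<Sum>j<n. v j0 * (\<Sum>k<n. X $$ (i0 * n + k, i * n + j) * cnj (v k)) * v j)"
      using row index_lt_mult that by (intro arg_cong[where f="\<lambda>x. cnj (v j1) * x"] sum.cong) auto
    also have "\<dots> = v j0 * cnj (v j1) * D i0 i"
      unfolding D_def sum_distrib_left sum_distrib_right
      by (intro sum.cong refl) (simp add: algebra_simps)
    finally show ?thesis .
  qed
  have ptrace: "ptrace_C' m n X $$ (i0, i) = D i0 i" if "i0 < m" "i < m" for i0 i
  proof -
    have "ptrace_C' m n X $$ (i0, i) = (\<Sum>j<n. v j * cnj (v j) * D i0 i)"
      unfolding ptrace_C'_def using that block by simp
    also have "\<dots> = (\<Sum>j<n. cnj (v j) * v j) * D i0 i"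
      unfolding sum_distrib_right by (intro sum.cong refl) (simp add: mult_ac)
    also have "\<dots> = D i0 i" using v by simp
    finally show ?thesis .
  qed
  show ?thesis
    by (rule mat_eq_tensor_blockI[of _ m n]) (use psd_carrier[OF X] block ptrace in \<open>auto simp: index_tensorCC Pv\<close>)
qed

lemma psd_summand_of_tensorCC_pure_state:
  fixes m n :: nat
  assumes I: "finite I" "i \<in> I" and f: "\<And>j. j \<in> I \<Longrightarrow> psd (m * n) (f j)"
    and sum: "msum (m * n) f I = tensorCC m n S P" and P: "pure_state n P"
  shows "f i = tensorCC m n (ptrace_C' m n (f i)) P" "psd m (ptrace_C' m n (f i))"
proof -
  show fi: "f i = tensorCC m n (ptrace_C' m n (f i)) P"
    using psd_msum_minus_member[of I i "m * n" f, OF I f] unfolding sum by (rule psd_below_tensorCC_pure_state[OF f[OF I(2)] _ P])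
  have "psd (m * n) (tensorCC m n (ptrace_C' m n (f i)) P)"
    using f[OF I(2)] by (subst (asm) fi)
  then show "psd m (ptrace_C' m n (f i))"
    by (rule psd_tensorCC_pure_state_imp_psd[OF _ P ptrace_C'_carrier])
qed

section \<open>Assemblages\<close>

lemma assemblageD:
  assumes "assemblage n s"
  shows "psd n (s a b d x y w)"
    and "msum n (\<lambda>d. s a b d x y w) UNIV = msum n (\<lambda>d. s a b d x y w') UNIV"
proof -
  have "\<forall>a b d x y w. psd n (s a b d x y w)"
    using assms unfolding assemblage_def by (elim conjE)
  then show "psd n (s a b d x y w)" by blast
  have "\<forall>a b x y w w'. msum n (\<lambda>d. s a b d x y w) UNIV = msum n (\<lambda>d. s a b d x y w') UNIV"
    using assms unfolding assemblage_def by (elim conjE)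
  then show "msum n (\<lambda>d. s a b d x y w) UNIV = msum n (\<lambda>d. s a b d x y w') UNIV" by blast
qed

lemma extremal_bi_assemblage_imp_bi_assemblage:
  "extremal_bi_assemblage n s \<Longrightarrow> bi_assemblage n s"
  unfolding extremal_bi_assemblage_def by (elim conjE)

lemma bi_assemblageD:
  assumes "bi_assemblage n s"
  shows "psd n (s d w)" "mtrace (msum n (\<lambda>d. s d w) UNIV) = 1"
    "msum n (\<lambda>d. s d w) UNIV = msum n (\<lambda>d. s d w') UNIV"
  using assms unfolding bi_assemblage_def density_def by blast+

lemma bi_assemblage_rescale:
  fixes t :: "'d::finite \<Rightarrow> 'w::finite \<Rightarrow> complex mat"
  assumes t: "\<And>d w. psd n (t d w)"
    and nosig: "\<And>w w'. msum n (\<lambda>d. t d w) UNIV = msum n (\<lambda>d. t d w') UNIV"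
    and tr: "\<And>w. mtrace (msum n (\<lambda>d. t d w) UNIV) = complex_of_real p" and p: "0 < p"
  shows "bi_assemblage n (\<lambda>d w. complex_of_real (1 / p) \<cdot>\<^sub>m t d w)"
proof -
  have sum: "msum n (\<lambda>d. complex_of_real (1 / p) \<cdot>\<^sub>m t d w) UNIV
      = complex_of_real (1 / p) \<cdot>\<^sub>m msum n (\<lambda>d. t d w) UNIV" for w
    by (rule msum_smult) (rule psd_carrier[OF t])
  show ?thesis unfolding bi_assemblage_def density_def sum
  proof (intro conjI allI)
    show "psd n (complex_of_real (1 / p) \<cdot>\<^sub>m t d w)" for d w
      by (rule psd_smult[OF t]) (use p in simp)
    show "psd n (complex_of_real (1 / p) \<cdot>\<^sub>m msum n (\<lambda>d. t d w) UNIV)" for w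
      by (rule psd_smult[OF psd_msum[OF t]]) (use p in simp)
    show "mtrace (complex_of_real (1 / p) \<cdot>\<^sub>m msum n (\<lambda>d. t d w) UNIV) = 1" for w
      using p by (simp add: mtrace_smult[OF msum_carrier] tr)
    show "complex_of_real (1 / p) \<cdot>\<^sub>m msum n (\<lambda>d. t d w) UNIV
        = complex_of_real (1 / p) \<cdot>\<^sub>m msum n (\<lambda>d. t d w') UNIV" for w w'
      using nosig[of w w'] by simp
  qed
qed

lemma extremal_bi_assemblage_dominated:
  fixes s t :: "'d::finite \<Rightarrow> 'w::finite \<Rightarrow> complex mat"
  assumes ext: "extremal_bi_assemblage n s"
    and t: "\<And>d w. psd n (t d w)" and s_minus_t: "\<And>d w. psd n (s d w - t d w)"
    and nosig: "\<And>w w'. msum n (\<lambda>d. t d w) UNIV = msum n (\<lambda>d. t d w') UNIV"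
  shows "t d w = mtrace (msum n (\<lambda>d. t d w0) UNIV) \<cdot>\<^sub>m s d w"
proof -
  note s = bi_assemblageD[OF extremal_bi_assemblage_imp_bi_assemblage[OF ext]]
  note carrier = psd_carrier[OF s(1)] psd_carrier[OF t]
  note dims [simp] = carrier_matD[OF psd_carrier[OF s(1)]] carrier_matD[OF psd_carrier[OF t]]
  define p where "p = Re (mtrace (msum n (\<lambda>d. t d w0) UNIV))"
  have tr_t: "mtrace (msum n (\<lambda>d. t d w') UNIV) = complex_of_real p" for w'
    using psd_mtraceD(1)[OF psd_msum[OF t]] nosig[of w' w0] unfolding p_def by (simp add: complex_eq_iff)
  define r where "r d w = s d w - t d w" for d w
  have r_sum: "msum n (\<lambda>d. r d w) UNIV = msum n (\<lambda>d. s d w) UNIV - msum n (\<lambda>d. t d w) UNIV" for w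
    unfolding r_def using carrier by (intro msum_minus)
  have r_nosig: "msum n (\<lambda>d. r d w) UNIV = msum n (\<lambda>d. r d w') UNIV" for w w'
    unfolding r_sum using s(3) nosig by metis
  have tr_r: "mtrace (msum n (\<lambda>d. r d w) UNIV) = complex_of_real (1 - p)" for w
    unfolding r_sum by (simp add: mtrace_minus[OF msum_carrier msum_carrier] s(2) tr_t)
  have "0 \<le> p" using psd_mtraceD(2)[OF psd_msum[OF t]] unfolding p_def .
  moreover have "psd n (msum n (\<lambda>d. r d w0) UNIV)"
    by (intro psd_msum) (simp add: r_def s_minus_t)
  then have "p \<le> 1" using psd_mtraceD(2) tr_r by fastforce
  ultimately consider "p = 0" | "p = 1" | "0 < p" "p < 1" by linarith
  then show ?thesis
  proof cases
    case 1
    then have "t d w = 0\<^sub>m n n" using msum_psd_mtrace_zero[of UNIV n "\<lambda>d. t d w"] t tr_t by simp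
    then show ?thesis using 1 tr_t carrier by (intro eq_matI) auto
  next
    case 2
    then have r0: "s d w - t d w = 0\<^sub>m n n"
      using msum_psd_mtrace_zero[of UNIV n "\<lambda>d. r d w"] s_minus_t tr_r unfolding r_def by simp
    have "t d w = s d w"
    proof (rule eq_matI)
      fix i j assume "i < dim_row (s d w)" "j < dim_col (s d w)"
      then show "t d w $$ (i, j) = s d w $$ (i, j)" using arg_cong[OF r0, of "\<lambda>A. A $$ (i, j)"] by simp
    qed simp_all
    then show ?thesis using 2 tr_t by (intro eq_matI) auto
  next
    case 3
    define t1 where "t1 d w = complex_of_real (1 / p) \<cdot>\<^sub>m t d w" for d w
    define t2 where "t2 d w = complex_of_real (1 / (1 - p)) \<cdot>\<^sub>m r d w" for d w
    have "bi_assemblage n t1"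
      unfolding t1_def using 3 by (intro bi_assemblage_rescale[OF t nosig tr_t]) simp
    moreover have "bi_assemblage n t2"
      unfolding t2_def using 3 s_minus_t
      by (intro bi_assemblage_rescale[OF _ r_nosig tr_r]) (simp_all add: r_def)
    moreover have "s d w = complex_of_real p \<cdot>\<^sub>m t1 d w + complex_of_real (1 - p) \<cdot>\<^sub>m t2 d w" for d w
      using 3 carrier by (intro eq_matI) (auto simp: t1_def t2_def r_def field_simps)
    ultimately have "t1 = s" using ext 3 unfolding extremal_bi_assemblage_def by blast
    then have "t1 d w = s d w" by simp
    then have t1s: "complex_of_real (1 / p) \<cdot>\<^sub>m t d w = s d w" by (simp add: t1_def)
    have "t d w $$ (i, j) = complex_of_real p * s d w $$ (i, j)" if "i < n" "j < n" for i j
      using arg_cong[OF t1s, of "\<lambda>A. A $$ (i, j)"] that 3 by (simp add: field_simps)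
    then show ?thesis using tr_t by (intro eq_matI) auto
  qed
qed

theorem mainTheorem2:
  fixes nC nC' :: nat
    and sigma :: "'a::finite \<Rightarrow> 'b::finite \<Rightarrow> 'd::finite \<Rightarrow> 'x::finite \<Rightarrow> 'y::finite \<Rightarrow> 'w::finite \<Rightarrow> complex mat"
    and sigmaDW :: "'d \<Rightarrow> 'w \<Rightarrow> complex mat"
    and psi :: "complex mat"
  assumes asm: "assemblage (nC * nC') sigma"
    and i: "\<forall>x y d w. sigmaDW d w = ptrace_C' nC nC' (msum (nC * nC') (\<lambda>(a, b). sigma a b d x y w) UNIV)"
    and ii: "\<forall>d w x y. msum (nC * nC') (\<lambda>(a, b). sigma a b d x y w) UNIV = tensorCC nC nC' (sigmaDW d w) psi"
    and ext: "extremal_bi_assemblage nC sigmaDW"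
    and pure: "pure_state nC' psi"
  shows "\<exists>sigmaAB :: 'a \<Rightarrow> 'b \<Rightarrow> 'x \<Rightarrow> 'y \<Rightarrow> complex mat.
           (\<forall>a b x y w. sigmaAB a b x y = ptrace_C nC nC' (msum (nC * nC') (\<lambda>d. sigma a b d x y w) UNIV)) \<and>
           (\<forall>a b d x y w. sigma a b d x y w = tensorCC nC nC' (sigmaDW d w) (sigmaAB a b x y))"
proof -
  note sigma_psd = assemblageD(1)[OF asm] and nosig = assemblageD(2)[OF asm]
  have sigmaDW_carrier: "sigmaDW d w \<in> carrier_mat nC nC" for d w
    using bi_assemblageD(1)[OF extremal_bi_assemblage_imp_bi_assemblage[OF ext]] by (rule psd_carrier)
  define T where "T a b d x y w = ptrace_C' nC nC' (sigma a b d x y w)" for a b d x y w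
  have sigma_T: "sigma a b d x y w = tensorCC nC nC' (T a b d x y w) psi"
    and T_psd: "psd nC (T a b d x y w)" for a b d x y w
    using psd_summand_of_tensorCC_pure_state[of UNIV "(a, b)" nC nC' "\<lambda>(a, b). sigma a b d x y w"]
      sigma_psd ii pure unfolding T_def by auto
  have sigmaDW_T: "sigmaDW d w = msum nC (\<lambda>(a, b). T a b d x y w) UNIV" for d w x y
    using i[rule_format, where x = x and y = y and d = d and w = w]
    by (simp add: T_def ptrace_C'_msum case_prod_unfold)
  have T_dominated: "psd nC (sigmaDW d w - T a b d x y w)" for a b d x y w
    using psd_msum_minus_member[of UNIV "(a, b)" nC "\<lambda>(a, b). T a b d x y w"] T_psd
    unfolding sigmaDW_T[of d w x y] by auto
  have T_nosig: "msum nC (\<lambda>d. T a b d x y w) UNIV = msum nC (\<lambda>d. T a b d x y w') UNIV" for a b x y w w'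
    unfolding T_def ptrace_C'_msum[symmetric] using nosig[of a b x y w w'] by simp
  have T_scalar: "T a b d x y w = mtrace (msum nC (\<lambda>d. T a b d x y undefined) UNIV) \<cdot>\<^sub>m sigmaDW d w"
    for a b d x y w
    by (rule extremal_bi_assemblage_dominated[OF ext T_psd T_dominated T_nosig])
  define sigmaAB where "sigmaAB a b x y = ptrace_C nC nC' (msum (nC * nC') (\<lambda>d. sigma a b d x y undefined) UNIV)"
    for a b x y
  have sigmaAB: "sigmaAB a b x y = mtrace (msum nC (\<lambda>d. T a b d x y undefined) UNIV) \<cdot>\<^sub>m psi" for a b x y
    unfolding sigmaAB_def sigma_T using pure_state_carrier[OF pure]
    by (intro ptrace_C_msum_tensorCC) (auto simp: T_def)
  show ?thesis
  proof (intro exI[of _ sigmaAB] conjI allI)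
    show "sigmaAB a b x y = ptrace_C nC nC' (msum (nC * nC') (\<lambda>d. sigma a b d x y w) UNIV)" for a b x y w
      unfolding sigmaAB_def using nosig[of a b x y undefined w] by simp
    show "sigma a b d x y w = tensorCC nC nC' (sigmaDW d w) (sigmaAB a b x y)" for a b d x y w
      unfolding sigma_T sigmaAB T_scalar[of a b d x y w]
      using sigmaDW_carrier pure_state_carrier[OF pure] by (rule tensorCC_smult)
  qed
qed

end
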